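(* Let $S\subset \mathbb{R}^2$ be measurable and such that $S$ and $S^\mathsf{c}$ satisfy the $r$-rolling condition. For any $0<\alpha\leq r$, there is a constant $A > 0$ depending only on $\alpha$ such that, for any $z \notin S$, \[ \mu(B(z, \alpha) \cap S) \geq A \, \max\big(0,\alpha -\operatorname{dist}(z, \partial S)\big)^{3/2}. \]
   Context: A set $T\subset\mathbb{R}^2$ satisfies the $r$-rolling condition ($r>0$) if for every $x \in \partial T$ there is an open ball $B$ of radius $r$ with $B \cap T = \emptyset$ and $x \in \partial B$. $S^\mathsf{c}=\mathbb{R}^2\setminus S$. $\mu$ is Lebesgue measure on $\mathbb{R}^2$, $B(z,\alpha)$ is the open ball of center $z$ and radius $\alpha$, and $\operatorname{dist}(z,T)=\inf\{\|z-s\|:s\in T\}$. *)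

theory Defs
  imports "HOL-Analysis.Analysis"
begin

definition rolling :: "real \<Rightarrow> (real^2) set \<Rightarrow> bool" where
  "rolling r T \<longleftrightarrow> (\<forall>x\<in>frontier T. \<exists>c. ball c r \<inter> T = {} \<and> x \<in> frontier (ball c r))"

end

theory Submission
  imports Defs
begin

text \<open>Let \<open>x\<close> be a boundary point nearest to \<open>z\<close>, at distance \<open>d < \<alpha>\<close>. The rolling
  condition for the complement, applied at \<open>x\<close> and with the radius shrunk to \<open>\<alpha>\<close>, gives a ball
  \<open>B(c, \<alpha>) \<subseteq> S\<close> touching \<open>x\<close>, so \<open>|z - c| \<le> \<alpha> + d\<close>. Two discs of radius \<open>\<alpha>\<close> whose centres are
  at distance \<open>D < 2\<alpha>\<close> overlap in a lens of width \<open>h = 2\<alpha> - D\<close> and half-height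
  \<open>w = \<surd>(\<alpha>\<^sup>2 - D\<^sup>2/4) \<ge> \<surd>(h\<alpha>/2)\<close>. The triangle spanned by the two ends of the lens
  on the line of centres and one of its corners has area \<open>h w / 2 \<ge> \<surd>(\<alpha>/2) h\<^bsup>3/2\<^esup> / 2\<close>,
  and \<open>h \<ge> \<alpha> - d\<close>.\<close>

definition rot90 :: "real^2 \<Rightarrow> real^2" where
  "rot90 x = vector [- x$2, x$1]"

lemma norm_vec2_sq: "(norm (x::real^2))\<^sup>2 = (x$1)\<^sup>2 + (x$2)\<^sup>2"
  by (simp add: norm_vec_def L2_set_def sum_2)

lemma norm_rot90 [simp]: "norm (rot90 x) = norm x"
  by (simp add: rot90_def norm_vec_def L2_set_def sum_2 add.commute)

lemma orthogonal_rot90: "orthogonal x (rot90 x)"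
  by (simp add: orthogonal_def rot90_def inner_vec_def sum_2)

lemma unit_vector_along:
  fixes v :: "'a::{real_normed_vector, perfect_space}"
  obtains n where "norm n = 1" "v = norm v *\<^sub>R n"
proof (cases "v = 0")
  case True
  obtain n :: 'a where "norm n = 1" using vector_choose_size by (metis zero_le_one)
  with True show ?thesis using that by simp
next
  case False
  then show ?thesis using that[of "v /\<^sub>R norm v"] by simp
qed

lemma dist_orthonormal_coords:
  fixes m n \<nu> :: "'a::real_inner"
  assumes "orthogonal n \<nu>" "norm n = 1" "norm \<nu> = 1"
  shows "(dist (m + a *\<^sub>R n + b *\<^sub>R \<nu>) (m + c *\<^sub>R n + d *\<^sub>R \<nu>))\<^sup>2 = (a - c)\<^sup>2 + (b - d)\<^sup>2"
proof -
  have "m + a *\<^sub>R n + b *\<^sub>R \<nu> - (m + c *\<^sub>R n + d *\<^sub>R \<nu>) = (a - c) *\<^sub>R n + (b - d) *\<^sub>R \<nu>"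
    by (simp add: algebra_simps)
  moreover have "orthogonal ((a - c) *\<^sub>R n) ((b - d) *\<^sub>R \<nu>)"
    using assms(1) by (simp add: orthogonal_clauses)
  ultimately show ?thesis
    using assms by (simp add: dist_norm norm_add_Pythagorean)
qed

lemma measure_triangle_rot90:
  fixes a n :: "real^2"
  shows "measure lebesgue (convex hull {a, a + b *\<^sub>R n, a + c *\<^sub>R n + h *\<^sub>R rot90 n})
           = \<bar>b * h\<bar> * (norm n)\<^sup>2 / 2"
proof -
  let ?T = "convex hull {a, a + b *\<^sub>R n, a + c *\<^sub>R n + h *\<^sub>R rot90 n}"
  have "closed ?T"
    by (intro compact_imp_closed finite_imp_compact_convex_hull) auto
  then have "measure lebesgue ?T = measure lborel ?T"
    by (intro measure_completion) auto
  also have "\<dots> = \<bar>- (b * h) * ((n$1)\<^sup>2 + (n$2)\<^sup>2)\<bar> / 2"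
    by (simp add: content_triangle rot90_def algebra_simps power2_eq_square)
  finally show ?thesis by (simp add: norm_vec2_sq abs_mult)
qed

lemma measure_convex_le_measure_ball_Int:
  fixes p q :: "'a::euclidean_space"
  assumes "convex T" "bounded T" "T \<subseteq> cball p \<alpha> \<inter> cball q \<alpha>"
  shows "measure lebesgue T \<le> measure lebesgue (ball p \<alpha> \<inter> ball q \<alpha>)"
proof -
  have "measure lebesgue T = measure lebesgue (interior T)"
    using assms by (intro measure_interior[symmetric] negligible_convex_frontier) auto
  also have "\<dots> \<le> measure lebesgue (ball p \<alpha> \<inter> ball q \<alpha>)"
    using interior_mono[OF assms(3)]
    by (intro measure_mono_fmeasurable) (auto simp: interior_Int intro: fmeasurable_Int_fmeasurable)
  finally show ?thesis .
qed

lemma powr_three_halves: "0 \<le> x \<Longrightarrow> x powr (3/2) = x * sqrt x"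
  by (simp add: powr_add[of x 1 "1/2", simplified] powr_half_sqrt)

lemma measure_ball_Int_ball_ge_triangle:
  fixes p q :: "real^2"
  assumes "dist p q < 2 * \<alpha>"
  shows "(2 * \<alpha> - dist p q) * sqrt (\<alpha>\<^sup>2 - (dist p q)\<^sup>2 / 4) / 2
           \<le> measure lebesgue (ball p \<alpha> \<inter> ball q \<alpha>)"
proof -
  define D where "D = dist p q"
  define h where "h = 2 * \<alpha> - D"
  define w where "w = sqrt (\<alpha>\<^sup>2 - D\<^sup>2 / 4)"
  have "0 \<le> D" "0 < h" "0 < \<alpha>"
    using assms zero_le_dist[of p q] unfolding D_def h_def by linarith+
  obtain n where n: "norm n = 1" "q = p + D *\<^sub>R n"
    using unit_vector_along[of "q - p"]
    by (metis D_def dist_norm norm_minus_commute add.commute diff_add_cancel)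
  define P where "P a b = p + a *\<^sub>R n + b *\<^sub>R rot90 n" for a b
  have dist_P: "(dist (P a b) (P c d))\<^sup>2 = (a - c)\<^sup>2 + (b - d)\<^sup>2" for a b c d
    unfolding P_def using n by (intro dist_orthonormal_coords) (simp_all add: orthogonal_rot90)
  have dist_P_le: "dist (P c d) (P a b) \<le> \<alpha>" if "(c - a)\<^sup>2 + (d - b)\<^sup>2 \<le> \<alpha>\<^sup>2" for a b c d
    using that dist_P[of c d a b] \<open>0 < \<alpha>\<close>
    by (metis power2_le_imp_le less_imp_le)
  have p: "p = P 0 0" and q: "q = P D 0"
    using n(2) by (simp_all add: P_def)
  have "D\<^sup>2 \<le> (2 * \<alpha>)\<^sup>2"
    using \<open>0 \<le> D\<close> \<open>0 < h\<close> unfolding h_def by (intro power_mono) auto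
  then have "0 \<le> \<alpha>\<^sup>2 - D\<^sup>2 / 4"
    by (simp add: power_mult_distrib)
  then have w_sq: "(D / 2)\<^sup>2 + w\<^sup>2 = \<alpha>\<^sup>2" and "0 \<le> w"
    by (simp_all add: w_def power_divide)
  have "(D - \<alpha>)\<^sup>2 = \<alpha>\<^sup>2 - D * h"
    by (simp add: h_def power2_eq_square algebra_simps)
  moreover have "0 \<le> D * h"
    using \<open>0 \<le> D\<close> \<open>0 < h\<close> by simp
  ultimately have "(D - \<alpha>)\<^sup>2 \<le> \<alpha>\<^sup>2"
    by linarith
  then have vertices: "{P (D - \<alpha>) 0, P \<alpha> 0, P (D / 2) w} \<subseteq> cball p \<alpha> \<inter> cball q \<alpha>"
    unfolding p q mem_cball using w_sq power2_commute[of D \<alpha>]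
    by (auto intro!: dist_P_le simp: field_simps)
  define T where "T = convex hull {P (D - \<alpha>) 0, P \<alpha> 0, P (D / 2) w}"
  have "T = convex hull {P (D - \<alpha>) 0, P (D - \<alpha>) 0 + h *\<^sub>R n,
                          P (D - \<alpha>) 0 + (h / 2) *\<^sub>R n + w *\<^sub>R rot90 n}"
  proof -
    have "P a b + x *\<^sub>R n = P (a + x) b" "P a b + x *\<^sub>R rot90 n = P a (b + x)" for a b x
      by (simp_all add: P_def algebra_simps)
    moreover have "D - \<alpha> + h = \<alpha>" "D - \<alpha> + h / 2 = D / 2"
      by (simp_all add: h_def field_simps)
    ultimately show ?thesis
      by (simp only: T_def add_0_left)
  qed
  then have "measure lebesgue T = h * w / 2"
    using n \<open>0 < h\<close> \<open>0 \<le> w\<close> by (simp add: measure_triangle_rot90)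
  moreover have "measure lebesgue T \<le> measure lebesgue (ball p \<alpha> \<inter> ball q \<alpha>)"
    unfolding T_def
    by (intro measure_convex_le_measure_ball_Int convex_convex_hull finite_imp_bounded_convex_hull
        hull_minimal[OF vertices] convex_Int convex_cball) auto
  ultimately show ?thesis
    by (simp add: h_def w_def D_def)
qed

lemma measure_ball_Int_ball_ge:
  fixes p q :: "real^2"
  assumes "dist p q < 2 * \<alpha>"
  shows "sqrt (\<alpha> / 2) / 2 * (2 * \<alpha> - dist p q) powr (3/2) \<le> measure lebesgue (ball p \<alpha> \<inter> ball q \<alpha>)"
proof -
  define D where "D = dist p q"
  define h where "h = 2 * \<alpha> - D"
  have "0 \<le> D" "0 < h"
    using assms zero_le_dist[of p q] unfolding D_def h_def by linarith+
  have "sqrt (\<alpha> / 2) / 2 * h powr (3/2) = h * sqrt (h / 2 * \<alpha>) / 2"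
  proof -
    have "sqrt (h / 2 * \<alpha>) = sqrt h * sqrt (\<alpha> / 2)"
      by (simp add: real_sqrt_mult[symmetric])
    then show ?thesis
      using \<open>0 < h\<close> by (simp add: powr_three_halves)
  qed
  also have "\<dots> \<le> h * sqrt (\<alpha>\<^sup>2 - D\<^sup>2 / 4) / 2"
  proof -
    have "\<alpha>\<^sup>2 - D\<^sup>2 / 4 = h / 2 * (\<alpha> + D / 2)"
      by (simp add: h_def power2_eq_square algebra_simps)
    then show ?thesis
      using \<open>0 \<le> D\<close> \<open>0 < h\<close> by (simp add: mult_left_mono)
  qed
  also have "\<dots> \<le> measure lebesgue (ball p \<alpha> \<inter> ball q \<alpha>)"
    using measure_ball_Int_ball_ge_triangle[OF assms] by (simp add: h_def D_def)
  finally show ?thesis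
    by (simp add: h_def D_def)
qed

lemma internally_tangent_ball:
  fixes c x :: "'a::real_normed_vector"
  assumes "dist c x = r" "0 < \<alpha>" "\<alpha> \<le> r"
  obtains c' where "ball c' \<alpha> \<subseteq> ball c r" "dist c' x = \<alpha>"
proof
  define c' where "c' = x + (\<alpha> / r) *\<^sub>R (c - x)"
  have "dist c' c = norm ((1 - \<alpha> / r) *\<^sub>R (x - c))"
    by (simp add: dist_norm c'_def algebra_simps)
  also have "\<dots> = (1 - \<alpha> / r) * r"
    unfolding norm_scaleR using assms by (simp add: dist_norm norm_minus_commute)
  also have "\<dots> = r - \<alpha>"
    using assms by (simp add: field_simps)
  finally have "dist c' c = r - \<alpha>" .
  have "dist c' x = norm ((\<alpha> / r) *\<^sub>R (c - x))"
    by (simp add: dist_norm c'_def)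
  also have "\<dots> = \<alpha>"
    using assms by (simp add: dist_norm)
  finally show "dist c' x = \<alpha>" .
  show "ball c' \<alpha> \<subseteq> ball c r"
  proof
    fix y assume "y \<in> ball c' \<alpha>"
    then show "y \<in> ball c r"
      using \<open>dist c' c = r - \<alpha>\<close> dist_triangle[of c y c'] by (simp add: dist_commute)
  qed
qed

lemma rolling_mono:
  assumes "rolling r T" "0 < \<alpha>" "\<alpha> \<le> r"
  shows "rolling \<alpha> T"
  unfolding rolling_def
proof
  fix x assume "x \<in> frontier T"
  then obtain c where "ball c r \<inter> T = {}" "x \<in> frontier (ball c r)"
    using assms(1) by (auto simp: rolling_def)
  moreover from this obtain c' where "ball c' \<alpha> \<subseteq> ball c r" "dist c' x = \<alpha>"
    using assms internally_tangent_ball[of c x r \<alpha>] by (auto simp: frontier_ball)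
  ultimately show "\<exists>c. ball c \<alpha> \<inter> T = {} \<and> x \<in> frontier (ball c \<alpha>)"
    using assms by (intro exI[of _ c']) (auto simp: frontier_ball)
qed

lemma rolling_complement_ball_near:
  assumes "rolling r (- S)" "0 < \<alpha>" "\<alpha> \<le> r" "frontier S \<noteq> {}"
  obtains c where "ball c \<alpha> \<subseteq> S" "dist z c \<le> \<alpha> + infdist z (frontier S)"
proof -
  obtain x where "x \<in> frontier S" "dist z x = infdist z (frontier S)"
    using infdist_attains_inf[OF frontier_closed \<open>frontier S \<noteq> {}\<close>, of z] by metis
  moreover have "rolling \<alpha> (- S)"
    using assms(1-3) by (rule rolling_mono)
  ultimately obtain c where "ball c \<alpha> \<inter> - S = {}" "x \<in> frontier (ball c \<alpha>)"
    unfolding rolling_def by auto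
  then have "ball c \<alpha> \<subseteq> S" "dist c x = \<alpha>"
    using assms(2) by (auto simp: frontier_ball)
  with that show ?thesis
    using dist_triangle[of z c x] \<open>dist z x = infdist z (frontier S)\<close> by (simp add: dist_commute)
qed

theorem lemma2:
  fixes \<alpha> :: real
  assumes "\<alpha> > 0"
  shows "\<exists>A>0. \<forall>(r::real) (S::(real^2) set) z.
           \<alpha> \<le> r \<and> S \<in> sets lebesgue \<and> rolling r S \<and> rolling r (- S) \<and> z \<notin> S
           \<and> frontier S \<noteq> {} \<longrightarrow>
           measure lebesgue (ball z \<alpha> \<inter> S) \<ge> A * (max 0 (\<alpha> - infdist z (frontier S))) powr (3/2)"
proof (intro exI[of _ "sqrt (\<alpha> / 2) / 2"] conjI allI impI)
  show "sqrt (\<alpha> / 2) / 2 > 0"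
    using assms by simp
  fix r :: real and S :: "(real^2) set" and z :: "real^2"
  assume "\<alpha> \<le> r \<and> S \<in> sets lebesgue \<and> rolling r S \<and> rolling r (- S) \<and> z \<notin> S \<and> frontier S \<noteq> {}"
  then obtain c where c: "ball c \<alpha> \<subseteq> S" "dist z c \<le> \<alpha> + infdist z (frontier S)"
    and "S \<in> sets lebesgue"
    using rolling_complement_ball_near[of r S \<alpha>] assms by auto
  define d where "d = infdist z (frontier S)"
  show "sqrt (\<alpha> / 2) / 2 * (max 0 (\<alpha> - d)) powr (3/2) \<le> measure lebesgue (ball z \<alpha> \<inter> S)"
  proof (cases "d < \<alpha>")
    case False
    then show ?thesis
      by (simp add: max_def)
  next
    case True
    then have "sqrt (\<alpha> / 2) / 2 * (max 0 (\<alpha> - d)) powr (3/2)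
                 \<le> sqrt (\<alpha> / 2) / 2 * (2 * \<alpha> - dist z c) powr (3/2)"
      using c(2) assms by (intro mult_left_mono powr_mono2) (auto simp: d_def)
    also have "\<dots> \<le> measure lebesgue (ball z \<alpha> \<inter> ball c \<alpha>)"
      using True c(2) by (intro measure_ball_Int_ball_ge) (simp add: d_def)
    also have "\<dots> \<le> measure lebesgue (ball z \<alpha> \<inter> S)"
      using c(1) \<open>S \<in> sets lebesgue\<close>
      by (intro measure_mono_fmeasurable) (auto intro: fmeasurable_Int_fmeasurable)
    finally show ?thesis .
  qed
qed

end
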